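(* Let $n\ge 2$, $\delta\in(0,1)$, and let $X_{1},\dots,X_{n}\in[0,1]$ be IID real random variables with common law $F$, $X\sim F$. Then with probability at least $1-\delta$, \[ \bar{X}_{n}-\mathbb{E}_{F}X\le\sqrt{\frac{1+2S_{n}^{2}}{3n}\log\frac{2}{\delta}}+\sqrt{\frac{1}{12n}\sqrt{\frac{8}{\lfloor n/2\rfloor}}\log^{3/2}\left(\frac{2}{\delta}\right)}, \] and the same holds (with probability at least $1-\delta$) with $\bar{X}_{n}-\mathbb{E}_{F}X$ replaced by $\mathbb{E}_{F}X-\bar{X}_{n}$.
   Context: $\bar X_n=n^{-1}\sum_{i=1}^n X_i$, $S_{n}^{2}=(n-1)^{-1}\sum_{i=1}^{n}(X_{i}-\bar{X}_{n})^{2}$ is the unbiased sample variance, $\mathbb{E}_F X$ is the mean of $X\sim F$. $\lfloor\cdot\rfloor$ is the floor function. *)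

theory Defs
  imports "HOL-Probability.Probability"
begin

definition sample_mean :: "nat \<Rightarrow> (nat \<Rightarrow> real) \<Rightarrow> real" where
  "sample_mean n x = (\<Sum>i<n. x i) / real n"

definition sample_var :: "nat \<Rightarrow> (nat \<Rightarrow> real) \<Rightarrow> real" where
  "sample_var n x = (\<Sum>i<n. (x i - sample_mean n x)^2) / (real n - 1)"

definition emp_bernstein_bound :: "nat \<Rightarrow> real \<Rightarrow> real \<Rightarrow> real" where
  "emp_bernstein_bound n \<delta> s2 =
     sqrt ((1 + 2 * s2) / (3 * real n) * ln (2 / \<delta>))
   + sqrt (1 / (12 * real n) * sqrt (8 / real (n div 2)) * (ln (2 / \<delta>)) powr (3/2))"

end

theory Submission
  imports Defs
begin

text \<open>
  The mean is handled by a Chernoff bound with a Bernstein-type estimate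
  E exp(l (Y - E Y)) \<le> exp (l^2 (1 + 2 Var Y) / 12) for random variables Y with values in [0,1].
  A quadratic majorant of the exponential reduces Y to the two-point law on {a, 1} with the same
  mean and variance; the logarithm of its moment generating function is an increment of ln cosh,
  which a second-order estimate bounds.

  The unknown variance is then replaced by the sample variance. For every permutation of the
  sample, the average of the floor(n/2) disjoint pair terms (X i - X j)^2 / 2 is a mean of independent
  variables in [0, 1/2] with expectation Var X, so Hoeffding's lemma bounds its lower tail; the
  sample variance is the average of these statistics over all permutations, and Jensen's
  inequality transfers the bound, giving the tail exp (-8 floor(n/2) \<epsilon>^2). A union bound
  over the two deviation events, each of probability at most \<delta>/2, yields the theorem.
\<close>

section \<open>Elementary inequalities\<close>

lemma ge_tangent_if_second_deriv_nonneg: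
  fixes f f' f'' :: "real \<Rightarrow> real"
  assumes f': "\<And>t. min c x \<le> t \<Longrightarrow> t \<le> max c x \<Longrightarrow> (f has_real_derivative f' t) (at t)"
    and f'': "\<And>t. min c x \<le> t \<Longrightarrow> t \<le> max c x \<Longrightarrow> (f' has_real_derivative f'' t) (at t)"
    and nonneg: "\<And>t. min c x \<le> t \<Longrightarrow> t \<le> max c x \<Longrightarrow> f'' t \<ge> 0"
  shows "f x \<ge> f c + f' c * (x - c)"
proof (cases "x = c")
  case False
  define D where "D = (\<lambda>m::nat. if m = 0 then f else if m = 1 then f' else f'')"
  have "\<exists>t. (if x < c then x < t \<and> t < c else c < t \<and> t < x) \<and>
    f x = (\<Sum>m<2. (D m c / fact m) * (x - c)^m) + (D 2 t / fact 2) * (x - c)^2"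
    by (rule Taylor[of 2 D f "min c x" "max c x" c x]) (use f' f'' False in \<open>auto simp: D_def\<close>)
  then obtain t where t: "if x < c then x < t \<and> t < c else c < t \<and> t < x"
    and taylor: "f x = (\<Sum>m<2. (D m c / fact m) * (x - c)^m) + (D 2 t / fact 2) * (x - c)^2"
    by blast
  have "f'' t \<ge> 0" using t by (intro nonneg) (auto split: if_splits)
  moreover have "f x = f c + f' c * (x - c) + f'' t / 2 * (x - c)^2"
    using taylor by (simp add: D_def numeral_2_eq_2 lessThan_Suc)
  ultimately show ?thesis by (simp add: add_increasing2)
qed simp

lemma cosh_real_neq_zero: "cosh (t::real) \<noteq> 0"
  using cosh_real_pos[of t] by linarith

lemma tanh_chord:
  fixes a s :: real
  assumes "0 \<le> s" "s \<le> a"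
  shows "s * tanh a \<le> a * tanh s"
proof -
  define F where "F = (\<lambda>t::real. t * tanh a - a * tanh t)"
  define F' where "F' = (\<lambda>t::real. tanh a - a * (1 - tanh t ^ 2))"
  define F'' where "F'' = (\<lambda>t::real. a * (2 * tanh t * (1 - tanh t ^ 2)))"
  have F': "(F has_real_derivative F' t) (at t)" for t
    unfolding F_def F'_def by (auto intro!: derivative_eq_intros simp: cosh_real_neq_zero)
  have F'': "(F' has_real_derivative F'' t) (at t)" for t
    unfolding F'_def F''_def
    by (auto intro!: derivative_eq_intros simp: cosh_real_neq_zero algebra_simps power2_eq_square)
  have convex: "F'' t \<ge> 0" if "0 \<le> t" for t
    using that assms tanh_real_bounds[of t] by (auto simp: F''_def abs_square_le_1)
  \<comment> \<open>F is convex on [0, a] and vanishes at both ends, hence is nonpositive at s.\<close>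
  have "F 0 \<ge> F s + F' s * (0 - s)" "F a \<ge> F s + F' s * (a - s)"
    by (rule ge_tangent_if_second_deriv_nonneg[OF F' F'']; use convex assms in auto)+
  moreover have "F 0 = 0" "F a = 0" by (auto simp: F_def)
  ultimately have "F s \<le> F' s * s" "F s \<le> - (F' s * (a - s))" by auto
  hence "(a - s) * F s \<le> (a - s) * (F' s * s)" "s * F s \<le> s * (- (F' s * (a - s)))"
    using assms by (intro mult_left_mono; simp)+
  hence "a * F s \<le> 0" by (simp add: algebra_simps)
  thus ?thesis
  proof (cases "a = 0")
    case False
    hence "F s \<le> 0" using \<open>a * F s \<le> 0\<close> assms by (simp add: mult_le_0_iff)
    thus ?thesis by (simp add: F_def)
  qed (use assms in simp)
qed

lemma mult_sech_squared_le_tanh: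
  fixes a :: real
  assumes "a \<ge> 0"
  shows "a * (1 - tanh a ^ 2) \<le> tanh a"
proof -
  define g where "g = (\<lambda>t::real. tanh t - t * (1 - tanh t ^ 2))"
  have "g 0 \<le> g a"
  proof (rule DERIV_nonneg_imp_nondecreasing[OF assms])
    fix t :: real assume "0 \<le> t"
    hence "2 * t * tanh t * (1 - tanh t ^ 2) \<ge> 0"
      using tanh_real_bounds[of t] by (auto simp: abs_square_le_1)
    moreover have "(g has_real_derivative 2 * t * tanh t * (1 - tanh t ^ 2)) (at t)"
      unfolding g_def
      by (auto intro!: derivative_eq_intros simp: cosh_real_neq_zero algebra_simps power2_eq_square)
    ultimately show "\<exists>y. (g has_real_derivative y) (at t) \<and> 0 \<le> y" by blast
  qed
  thus ?thesis by (simp add: g_def)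
qed

lemma three_tanh_le:
  fixes a :: real
  assumes "a \<ge> 0"
  shows "3 * tanh a \<le> a * (3 - tanh a ^ 2)"
proof -
  define g where "g = (\<lambda>t::real. t * (3 - tanh t ^ 2) - 3 * tanh t)"
  have "g 0 \<le> g a"
  proof (rule DERIV_nonneg_imp_nondecreasing[OF assms])
    fix t :: real assume "0 \<le> t"
    hence "2 * tanh t * (tanh t - t * (1 - tanh t ^ 2)) \<ge> 0"
      using mult_sech_squared_le_tanh[of t] by simp
    moreover have "(g has_real_derivative 2 * tanh t * (tanh t - t * (1 - tanh t ^ 2))) (at t)"
      unfolding g_def
      by (auto intro!: derivative_eq_intros simp: cosh_real_neq_zero algebra_simps power2_eq_square)
    ultimately show "\<exists>y. (g has_real_derivative y) (at t) \<and> 0 \<le> y" by blast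
  qed
  thus ?thesis by (simp add: g_def)
qed

definition ln_cosh_gap :: "real \<Rightarrow> real \<Rightarrow> real" where
  "ln_cosh_gap a x = x^2 * (3 - tanh a ^ 2) / 6 - (ln (cosh (a + x)) - ln (cosh a) - x * tanh a)"

definition ln_cosh_gap' :: "real \<Rightarrow> real \<Rightarrow> real" where
  "ln_cosh_gap' a x = x * (3 - tanh a ^ 2) / 3 - tanh (a + x) + tanh a"

lemma has_real_derivative_ln_cosh_gap:
  "(ln_cosh_gap a has_real_derivative ln_cosh_gap' a x) (at x)"
  unfolding ln_cosh_gap_def ln_cosh_gap'_def
  by (auto intro!: derivative_eq_intros
      simp: cosh_real_neq_zero cosh_real_pos tanh_def power2_eq_square field_simps)

lemma has_real_derivative_ln_cosh_gap':
  "(ln_cosh_gap' a has_real_derivative tanh (a + x) ^ 2 - tanh a ^ 2 / 3) (at x)"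
  unfolding ln_cosh_gap'_def
  by (auto intro!: derivative_eq_intros simp: cosh_real_neq_zero field_simps power2_eq_square)

lemma ln_cosh_gap_ge_tangent:
  assumes "\<And>t. min c x \<le> t \<Longrightarrow> t \<le> max c x \<Longrightarrow> tanh a ^ 2 \<le> tanh (a + t) ^ 2"
  shows "ln_cosh_gap a x \<ge> ln_cosh_gap a c + ln_cosh_gap' a c * (x - c)"
proof (rule ge_tangent_if_second_deriv_nonneg[OF has_real_derivative_ln_cosh_gap
      has_real_derivative_ln_cosh_gap'])
  fix t assume "min c x \<le> t" "t \<le> max c x"
  thus "tanh (a + t) ^ 2 - tanh a ^ 2 / 3 \<ge> 0"
    using assms[of t] zero_le_power2[of "tanh a"] by linarith
qed

lemma ln_cosh_gap_central:
  fixes a x :: real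
  assumes a: "a > 0" and x: "-2 * a \<le> x" "x \<le> 0"
  shows "ln_cosh_gap a x \<ge> 0"
proof -
  define T where "T = tanh a"
  have T: "T \<ge> 0" using a by (simp add: T_def)
  \<comment> \<open>Compare with the quartic P with double zeros at 0 and -2a: the chord bound
    for tanh makes the difference convex on [-2a, 0].\<close>
  define P where "P = (\<lambda>x. T^2 * x^2 * (x + 2*a)^2 / (12 * a^2))"
  define P' where "P' = (\<lambda>x. T^2 * (4*x^3 + 12*a*x^2 + 8*a^2*x) / (12 * a^2))"
  define P'' where "P'' = (\<lambda>x. T^2 * (12*x^2 + 24*a*x + 8*a^2) / (12 * a^2))"
  have P': "(P has_real_derivative P' t) (at t)" and P'': "(P' has_real_derivative P'' t) (at t)" for t
    unfolding P_def P'_def P''_def using a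
    by (auto intro!: derivative_eq_intros simp: field_simps power2_eq_square power3_eq_cube)
  have convex: "tanh (a + t) ^ 2 - tanh a ^ 2 / 3 - P'' t \<ge> 0" if "-2 * a \<le> t" "t \<le> 0" for t
  proof -
    have "\<bar>a + t\<bar> * T \<le> a * \<bar>tanh (a + t)\<bar>"
    proof (cases "a + t \<ge> 0")
      case True thus ?thesis using tanh_chord[of "a + t" a] that by (simp add: T_def)
    next
      case False
      have "-(a + t) * T \<le> a * tanh (-(a + t))"
        unfolding T_def using False that by (intro tanh_chord) auto
      hence "-(a + t) * T \<le> a * - tanh (a + t)" by (simp only: tanh_minus)
      moreover have "\<bar>a + t\<bar> = -(a + t)" "\<bar>tanh (a + t)\<bar> = - tanh (a + t)"
        using False by auto
      ultimately show ?thesis by simp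
    qed
    hence "(\<bar>a + t\<bar> * T)^2 \<le> (a * \<bar>tanh (a + t)\<bar>)^2"
      using T by (intro power_mono) auto
    hence "T^2 * (a + t)^2 / a^2 \<le> tanh (a + t)^2"
      using a by (simp add: power_mult_distrib field_simps)
    moreover have "tanh a ^ 2 / 3 + P'' t = T^2 * (a + t)^2 / a^2"
      unfolding P''_def T_def using a by (simp add: field_simps power2_eq_square)
    ultimately show ?thesis by simp
  qed
  have "ln_cosh_gap a x - P x \<ge> (ln_cosh_gap a 0 - P 0) + (ln_cosh_gap' a 0 - P' 0) * (x - 0)"
    by (rule ge_tangent_if_second_deriv_nonneg[where f'' = "\<lambda>t. tanh (a + t) ^ 2 - tanh a ^ 2 / 3 - P'' t"])
      (use x convex in \<open>auto intro!: DERIV_diff P' P'' has_real_derivative_ln_cosh_gap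
         has_real_derivative_ln_cosh_gap'\<close>)
  moreover have "ln_cosh_gap a 0 = 0" "ln_cosh_gap' a 0 = 0" "P 0 = 0" "P' 0 = 0"
    by (simp_all add: ln_cosh_gap_def ln_cosh_gap'_def P_def P'_def)
  moreover have "P x \<ge> 0" using a by (simp add: P_def)
  ultimately show ?thesis by simp
qed

lemma ln_cosh_gap_nonneg:
  fixes a x :: real
  assumes a: "a \<ge> 0"
  shows "ln_cosh_gap a x \<ge> 0"
proof -
  have T: "tanh a \<ge> 0" using a by simp
  consider "x \<ge> 0" | "-2 * a \<le> x" "x \<le> 0" | "x < -2 * a" by linarith
  then show ?thesis
  proof cases
    case 1
    have "ln_cosh_gap a x \<ge> ln_cosh_gap a 0 + ln_cosh_gap' a 0 * (x - 0)"
      using 1 a T by (intro ln_cosh_gap_ge_tangent power_mono) auto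
    thus ?thesis by (simp add: ln_cosh_gap_def ln_cosh_gap'_def)
  next
    case 2
    thus ?thesis
      using ln_cosh_gap_central[of a x] by (cases "a = 0") (auto simp: ln_cosh_gap_def)
  next
    case 3
    have "tanh a ^ 2 \<le> tanh (a + t) ^ 2" if "a + t \<le> -a" for t
    proof -
      have "tanh a \<le> - tanh (a + t)" using that by (simp flip: tanh_minus)
      thus ?thesis using T power_mono[of "tanh a" "- tanh (a + t)" 2] by simp
    qed
    hence "ln_cosh_gap a x \<ge> ln_cosh_gap a (-2 * a) + ln_cosh_gap' a (-2 * a) * (x - (-2 * a))"
      using 3 by (intro ln_cosh_gap_ge_tangent) auto
    moreover have "ln_cosh_gap a (-2 * a) \<ge> 0"
      using ln_cosh_gap_central[of a "-2 * a"] a by (cases "a = 0") (auto simp: ln_cosh_gap_def)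
    moreover have "ln_cosh_gap' a (-2 * a) = 2 * tanh a - 2 * a * (3 - tanh a ^ 2) / 3"
      by (simp add: ln_cosh_gap'_def)
    hence "ln_cosh_gap' a (-2 * a) * (x - (-2 * a)) \<ge> 0"
      using three_tanh_le[OF a] 3 by (intro mult_nonpos_nonpos) linarith+
    ultimately show ?thesis by linarith
  qed
qed

lemma ln_cosh_increment_le:
  fixes a x :: real
  shows "ln (cosh (a + x)) - ln (cosh a) - x * tanh a \<le> x^2 * (3 - tanh a ^ 2) / 6"
proof (cases "a \<ge> 0")
  case True
  thus ?thesis using ln_cosh_gap_nonneg[of a x] by (simp add: ln_cosh_gap_def)
next
  case False
  have "ln_cosh_gap (-a) (-x) \<ge> 0" using False by (intro ln_cosh_gap_nonneg) simp
  moreover have "cosh (- a - x) = cosh (a + x)"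
    using cosh_minus[of "a + x"] by simp
  ultimately show ?thesis by (simp add: ln_cosh_gap_def)
qed

lemma bernoulli_mgf_eq_cosh_ratio:
  fixes q l :: real
  assumes q: "0 < q" "q < 1"
  defines "a \<equiv> ln (q / (1 - q)) / 2"
  shows "tanh a = 2 * q - 1"
    and "1 - q + q * exp l = exp (l / 2) * cosh (a + l / 2) / cosh a"
proof -
  have w: "exp a ^ 2 = q / (1 - q)"
    using q by (simp add: a_def flip: exp_of_nat_mult)
  have half: "exp (l / 2) ^ 2 = exp l"
    by (simp flip: exp_of_nat_mult)
  have cosh: "cosh y = (exp y ^ 2 + 1) / (2 * exp y)" for y :: real
    by (simp add: cosh_def exp_minus field_simps power2_eq_square)
  have "sinh a = (exp a ^ 2 - 1) / (2 * exp a)"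
    by (simp add: sinh_def exp_minus field_simps power2_eq_square)
  hence "tanh a = (exp a ^ 2 - 1) / (exp a ^ 2 + 1)"
    by (simp add: tanh_def cosh)
  also have "\<dots> = 2 * q - 1"
    unfolding w using q by (simp add: divide_simps)
  finally show "tanh a = 2 * q - 1" .
  have "exp (l / 2) * cosh (a + l / 2) = ((exp a * exp (l / 2)) ^ 2 + 1) / (2 * exp a)"
    unfolding cosh exp_add by simp
  hence "exp (l / 2) * cosh (a + l / 2) / cosh a = (exp a ^ 2 * exp (l / 2) ^ 2 + 1) / (exp a ^ 2 + 1)"
    by (simp add: cosh[of a] power_mult_distrib)
  also have "\<dots> = 1 - q + q * exp l"
    unfolding w half using q by (simp add: divide_simps algebra_simps)
  finally show "1 - q + q * exp l = exp (l / 2) * cosh (a + l / 2) / cosh a" by simp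
qed

lemma ln_bernoulli_mgf_le:
  fixes q l :: real
  assumes q: "0 \<le> q" "q \<le> 1"
  shows "ln (1 - q + q * exp l) - q * l \<le> l^2 * (1 + 2 * q * (1 - q)) / 12"
proof (cases "q = 0 \<or> q = 1")
  case False
  hence q: "0 < q" "q < 1" using q by auto
  define a where "a = ln (q / (1 - q)) / 2"
  note mgf = bernoulli_mgf_eq_cosh_ratio[OF q, folded a_def]
  have "ln (1 - q + q * exp l) - q * l = ln (cosh (a + l/2)) - ln (cosh a) - l/2 * tanh a"
    unfolding mgf by (simp add: ln_mult ln_div cosh_real_pos algebra_simps)
  also have "\<dots> \<le> (l/2)^2 * (3 - tanh a ^ 2) / 6"
    by (rule ln_cosh_increment_le)
  also have "\<dots> = l^2 * (1 + 2 * q * (1 - q)) / 12"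
    unfolding mgf by (simp add: power2_eq_square field_simps)
  finally show ?thesis .
qed auto

lemma exp_remainder_le_half_square:
  fixes z :: real
  assumes "z \<le> 0"
  shows "exp z - 1 - z \<le> z^2 / 2"
proof -
  have "(\<lambda>t. t^2/2 - exp t + 1 + t) z \<ge> (\<lambda>t. t^2/2 - exp t + 1 + t) 0 + (0 - exp 0 + 1) * (z - 0)"
    by (rule ge_tangent_if_second_deriv_nonneg[where f' = "\<lambda>t. t - exp t + 1" and f'' = "\<lambda>t. 1 - exp t"])
      (use assms in \<open>auto intro!: derivative_eq_intros\<close>)
  thus ?thesis by simp
qed

lemma exp_remainder_ratio_mono:
  fixes z Z :: real
  assumes Z: "0 < Z" and zZ: "z \<le> Z"
  shows "(exp z - 1 - z) * Z^2 \<le> (exp Z - 1 - Z) * z^2"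
proof (cases "z \<le> 0")
  case True
  have "(exp z - 1 - z) * Z^2 \<le> (z^2/2) * Z^2"
    using exp_remainder_le_half_square[OF True] by (intro mult_right_mono) auto
  also have "\<dots> = (Z^2/2) * z^2" by simp
  also have "\<dots> \<le> (exp Z - 1 - Z) * z^2"
    using exp_lower_Taylor_quadratic[of Z] Z by (intro mult_right_mono) auto
  finally show ?thesis .
next
  case False
  define g where "g = (\<lambda>t::real. (exp t - 1 - t) / t^2)"
  have numerator_nonneg: "(t - 2) * exp t + t + 2 \<ge> 0" if "t \<ge> 0" for t :: real
  proof -
    have "(\<lambda>t. (t - 2) * exp t + t + 2) t \<ge> (\<lambda>t. (t - 2) * exp t + t + 2) 0 + ((0 - 1) * exp 0 + 1) * (t - 0)"
      by (rule ge_tangent_if_second_deriv_nonneg[where f' = "\<lambda>t. (t - 1) * exp t + 1"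
            and f'' = "\<lambda>t. t * exp t"])
        (use that in \<open>auto intro!: derivative_eq_intros simp: algebra_simps\<close>)
    thus ?thesis by simp
  qed
  have "g z \<le> g Z"
  proof (rule DERIV_nonneg_imp_nondecreasing[OF zZ])
    fix t assume t: "z \<le> t" "t \<le> Z"
    hence t0: "t > 0" using False by simp
    have "(g has_real_derivative ((t - 2) * exp t + t + 2) / t^3) (at t)"
      unfolding g_def using t0
      by (auto intro!: derivative_eq_intros simp: field_simps power2_eq_square power3_eq_cube)
    moreover have "((t - 2) * exp t + t + 2) / t^3 \<ge> 0"
      using numerator_nonneg[of t] t0 by simp
    ultimately show "\<exists>y. (g has_real_derivative y) (at t) \<and> 0 \<le> y" by blast
  qed
  thus ?thesis using False Z by (simp add: g_def field_simps)
qed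

lemma exp_le_quadratic_majorant:
  fixes l d u :: real
  assumes l: "l \<ge> 0" and d: "d > 0" and u: "u \<le> d"
  shows "exp (l * u) \<le> 1 + l * u + (u / d)^2 * (exp (l * d) - 1 - l * d)"
proof (cases "l = 0")
  case False
  hence l: "l > 0" using l by simp
  have "(exp (l * u) - 1 - l * u) * (l * d)^2 \<le> (exp (l * d) - 1 - l * d) * (l * u)^2"
    using l d u by (intro exp_remainder_ratio_mono) auto
  also have "(l * u)^2 = (u / d)^2 * (l * d)^2" using d by (simp add: field_simps)
  finally have "(exp (l * u) - 1 - l * u) * (l * d)^2 \<le> ((u / d)^2 * (exp (l * d) - 1 - l * d)) * (l * d)^2"
    by (simp only: mult_ac)
  hence "exp (l * u) - 1 - l * u \<le> (u / d)^2 * (exp (l * d) - 1 - l * d)"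
    by (rule mult_right_le_imp_le) (use l d in simp)
  thus ?thesis by simp
qed simp

lemma exp_average_le_average_exp:
  fixes f :: "'a \<Rightarrow> real"
  assumes "finite P" "P \<noteq> {}"
  shows "exp ((\<Sum>p\<in>P. f p) / real (card P)) \<le> (\<Sum>p\<in>P. exp (f p)) / real (card P)"
proof -
  have card: "real (card P) > 0" using assms by (simp add: card_gt_0_iff)
  have "exp ((\<Sum>p\<in>P. f p) / real (card P)) = exp (\<Sum>p\<in>P. (1 / real (card P)) *\<^sub>R f p)"
    by (simp add: sum_divide_distrib)
  also have "\<dots> \<le> (\<Sum>p\<in>P. (1 / real (card P)) * exp (f p))"
    by (rule convex_on_sum[OF assms exp_convex]) (use card in auto)
  finally show ?thesis by (simp add: sum_divide_distrib)
qed

lemma emp_bernstein_second_term_eq: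
  fixes L m n :: real
  assumes L: "L > 0" and m: "m > 0" and n: "n > 0"
  shows "2 * sqrt (L / (8 * m)) * L / (3 * n) = 1 / (12 * n) * sqrt (8 / m) * L powr (3/2)"
proof -
  have "L * sqrt L = L powr 1 * L powr (1/2)" using L by (simp add: powr_half_sqrt)
  also have "\<dots> = L powr (1 + 1/2)" by (rule powr_add[symmetric])
  finally have powr: "L powr (3/2) = L * sqrt L" by simp
  have sqrts: "sqrt (L / (8 * m)) = sqrt L / (sqrt 8 * sqrt m)" "sqrt (8 / m) = sqrt 8 / sqrt m"
    by (simp_all add: real_sqrt_divide real_sqrt_mult)
  \<comment> \<open>Abstract sqrt 8, of which only sqrt 8 * sqrt 8 = 8 is used, to keep the simplifier off it.\<close>
  have scale: "2 * (a / (r * s)) * L / (3 * N) = 1 / (12 * N) * (r / s) * (L * a)"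
    if r: "r > 0" "r * r = 8" and "s > 0" "N > 0" for r s a N :: real
  proof -
    have k: "2 / (3 * r) = r / 12" using r by (simp add: field_simps)
    have "2 * (a / (r * s)) * L / (3 * N) = (2 / (3 * r)) * (a * L / (N * s))"
      using that by (simp add: field_simps)
    also have "\<dots> = 1 / (12 * N) * (r / s) * (L * a)"
      unfolding k using that by (simp add: field_simps)
    finally show ?thesis .
  qed
  show ?thesis unfolding powr sqrts using m n by (intro scale) auto
qed

lemma sqrt_bernstein_le_emp_bernstein_bound:
  fixes n :: nat and \<delta> s2 S :: real
  assumes n: "n \<ge> 2" and \<delta>: "0 < \<delta>" "\<delta> < 1" and S: "S \<ge> 0"
    and s2: "s2 \<le> S + sqrt (ln (2 / \<delta>) / (8 * real (n div 2)))"
  shows "sqrt ((1 + 2 * s2) / (3 * real n) * ln (2 / \<delta>)) \<le> emp_bernstein_bound n \<delta> S"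
proof -
  define L where "L = ln (2 / \<delta>)"
  define m where "m = n div 2"
  define e where "e = sqrt (L / (8 * real m))"
  have L: "L > 0" using \<delta> by (simp add: L_def)
  have m: "real m > 0" using n by (simp add: m_def)
  have np: "real n > 0" using n by simp
  have "(1 + 2 * s2) / (3 * real n) * L \<le> (1 + 2 * (S + e)) / (3 * real n) * L"
    using s2 L np by (intro mult_right_mono divide_right_mono) (auto simp: e_def L_def m_def)
  also have "\<dots> = (1 + 2 * S) / (3 * real n) * L + 2 * e * L / (3 * real n)"
    using np by (simp add: field_simps)
  finally have "sqrt ((1 + 2 * s2) / (3 * real n) * L)
      \<le> sqrt ((1 + 2 * S) / (3 * real n) * L + 2 * e * L / (3 * real n))"
    by simp
  also have "\<dots> \<le> sqrt ((1 + 2 * S) / (3 * real n) * L) + sqrt (2 * e * L / (3 * real n))"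
    using S L np by (intro sqrt_add_le_add_sqrt) (auto simp: e_def)
  also have "2 * e * L / (3 * real n) = 1 / (12 * real n) * sqrt (8 / real m) * L powr (3/2)"
    unfolding e_def using L m np by (rule emp_bernstein_second_term_eq)
  finally show ?thesis by (simp add: emp_bernstein_bound_def L_def m_def)
qed

section \<open>Moment generating functions and tail bounds\<close>

context prob_space
begin

lemma expectation_in_unit_interval:
  fixes Y :: "'a \<Rightarrow> real"
  assumes Y: "Y \<in> borel_measurable M" "\<And>\<omega>. \<omega> \<in> space M \<Longrightarrow> Y \<omega> \<in> {0..1}"
  shows "expectation Y \<in> {0..1}"
proof -
  have "expectation Y \<le> expectation (\<lambda>_. 1)"
    using Y by (intro integral_mono integrable_const_bound[where B=1]) auto
  moreover have "expectation Y \<ge> 0" using Y by (intro integral_nonneg_AE AE_I2) auto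
  ultimately show ?thesis by (simp add: prob_space)
qed

lemma variance_le_mean_mult_one_minus:
  fixes Y :: "'a \<Rightarrow> real"
  assumes Y: "Y \<in> borel_measurable M" "\<And>\<omega>. \<omega> \<in> space M \<Longrightarrow> Y \<omega> \<in> {0..1}"
  shows "variance Y \<le> expectation Y * (1 - expectation Y)"
proof -
  have int: "integrable M Y" "integrable M (\<lambda>\<omega>. Y \<omega>^2)"
    using Y by (auto intro!: integrable_const_bound[where B=1] simp: abs_square_le_1)
  have "expectation (\<lambda>\<omega>. Y \<omega>^2) \<le> expectation Y"
    using Y int by (intro integral_mono) (auto simp: power2_eq_square mult_left_le)
  thus ?thesis using variance_eq[OF int] by (simp add: power2_eq_square algebra_simps)
qed

lemma mgf_le_quadratic_majorant:
  fixes Y :: "'a \<Rightarrow> real"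
  assumes Y: "Y \<in> borel_measurable M" "\<And>\<omega>. \<omega> \<in> space M \<Longrightarrow> Y \<omega> \<in> {0..1}"
    and l: "l \<ge> 0" and a: "a < 1"
  defines "R \<equiv> exp (l * (1 - a)) - 1 - l * (1 - a)"
  shows "expectation (\<lambda>\<omega>. exp (l * (Y \<omega> - a)))
           \<le> 1 + l * (expectation Y - a) + (variance Y + (expectation Y - a)^2) * R / (1 - a)^2"
proof -
  define \<mu> where "\<mu> = expectation Y"
  have int: "integrable M Y" "integrable M (\<lambda>\<omega>. Y \<omega>^2)"
    using Y by (auto intro!: integrable_const_bound[where B=1] simp: abs_square_le_1)
  have second_moment: "expectation (\<lambda>\<omega>. (Y \<omega> - a)^2) = variance Y + (\<mu> - a)^2"
  proof -
    have "expectation (\<lambda>\<omega>. (Y \<omega> - a)^2) = expectation (\<lambda>\<omega>. Y \<omega>^2 + a^2 - 2 * Y \<omega> * a)"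
      by (simp add: power2_diff)
    also have "\<dots> = expectation (\<lambda>\<omega>. Y \<omega>^2) + a^2 - 2 * \<mu> * a"
      using int by (simp add: prob_space \<mu>_def)
    finally show ?thesis
      using variance_eq[OF int] by (simp add: \<mu>_def power2_diff)
  qed
  have majorant: "exp (l * (Y \<omega> - a)) \<le> 1 + l * (Y \<omega> - a) + (Y \<omega> - a)^2 * (R / (1 - a)^2)"
    if "\<omega> \<in> space M" for \<omega>
    using exp_le_quadratic_majorant[OF l, of "1 - a" "Y \<omega> - a"] Y(2)[OF that] a
    by (simp add: R_def power_divide)
  have "expectation (\<lambda>\<omega>. exp (l * (Y \<omega> - a)))
          \<le> expectation (\<lambda>\<omega>. 1 + l * (Y \<omega> - a) + (Y \<omega> - a)^2 * (R / (1 - a)^2))"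
  proof (rule integral_mono[OF _ _ majorant])
    show "integrable M (\<lambda>\<omega>. exp (l * (Y \<omega> - a)))"
    proof (rule integrable_const_bound[where B="exp (l * (1 - a))"])
      show "AE \<omega> in M. norm (exp (l * (Y \<omega> - a))) \<le> exp (l * (1 - a))"
        using Y(2) l by (intro AE_I2) (auto intro: mult_left_mono)
    qed (use Y in measurable)
    show "integrable M (\<lambda>\<omega>. 1 + l * (Y \<omega> - a) + (Y \<omega> - a)^2 * (R / (1 - a)^2))"
      using int by (simp add: power2_diff)
  qed
  also have "\<dots> = 1 + l * (\<mu> - a) + expectation (\<lambda>\<omega>. (Y \<omega> - a)^2) * (R / (1 - a)^2)"
    using int by (simp add: power2_diff prob_space \<mu>_def)
  finally show ?thesis by (simp add: second_moment \<mu>_def)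
qed

lemma mgf_le_two_point:
  fixes Y :: "'a \<Rightarrow> real"
  assumes Y: "Y \<in> borel_measurable M" "\<And>\<omega>. \<omega> \<in> space M \<Longrightarrow> Y \<omega> \<in> {0..1}"
    and l: "l \<ge> 0" and mean: "expectation Y < 1"
  obtains q d where "0 \<le> q" "q \<le> 1" "0 < d" "d \<le> 1" "variance Y = q * (1 - q) * d^2"
    and "expectation (\<lambda>\<omega>. exp (l * (Y \<omega> - expectation Y))) \<le> exp (- (q * (l * d))) * (1 - q + q * exp (l * d))"
proof -
  define \<mu> where "\<mu> = expectation Y"
  define s2 where "s2 = variance Y"
  have \<mu>: "0 \<le> \<mu>" "\<mu> < 1" using expectation_in_unit_interval[OF Y] mean by (auto simp: \<mu>_def)
  have s2: "0 \<le> s2" "s2 \<le> \<mu> * (1 - \<mu>)"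
    using variance_positive variance_le_mean_mult_one_minus[OF Y] by (auto simp: s2_def \<mu>_def)
  \<comment> \<open>The two-point law on {a, 1} with the same mean and variance puts mass q on 1; d = 1 - a.\<close>
  define a where "a = \<mu> - s2 / (1 - \<mu>)"
  define d where "d = 1 - a"
  define q where "q = (\<mu> - a) / d"
  have "s2 / (1 - \<mu>) \<le> \<mu>" "s2 / (1 - \<mu>) \<ge> 0"
    using s2 \<mu> by (simp_all add: divide_le_eq mult.commute)
  hence d: "0 < d" "d \<le> 1" and "0 \<le> \<mu> - a" "\<mu> - a \<le> d"
    using \<mu> unfolding d_def a_def by linarith+
  hence q: "0 \<le> q" "q \<le> 1" "\<mu> - a = q * d" by (simp_all add: q_def divide_le_eq)
  have s2q: "s2 = q * (1 - q) * d^2"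
  proof -
    have "(1 - q) * d = 1 - \<mu>" using q(3) by (simp add: d_def algebra_simps)
    hence "q * (1 - q) * d^2 = (\<mu> - a) * (1 - \<mu>)" using q(3) by (simp add: power2_eq_square)
    thus ?thesis using \<mu> by (simp add: a_def)
  qed
  have "(\<lambda>\<omega>. exp (l * (Y \<omega> - \<mu>))) = (\<lambda>\<omega>. exp (- (q * (l * d))) * exp (l * (Y \<omega> - a)))"
    using q(3) by (simp add: exp_add[symmetric] algebra_simps)
  hence "expectation (\<lambda>\<omega>. exp (l * (Y \<omega> - \<mu>))) = exp (- (q * (l * d))) * expectation (\<lambda>\<omega>. exp (l * (Y \<omega> - a)))"
    by simp
  also have "\<dots> \<le> exp (- (q * (l * d))) * (1 - q + q * exp (l * d))"
  proof (rule mult_left_mono)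
    have "expectation (\<lambda>\<omega>. exp (l * (Y \<omega> - a)))
        \<le> 1 + l * (\<mu> - a) + (s2 + (\<mu> - a)^2) * (exp (l * d) - 1 - l * d) / d^2"
      using mgf_le_quadratic_majorant[OF Y l, of a] d by (simp add: \<mu>_def s2_def d_def)
    also have "s2 + (\<mu> - a)^2 = q * d^2"
      unfolding s2q q(3) by (simp add: power2_eq_square algebra_simps)
    also have "1 + l * (\<mu> - a) + q * d^2 * (exp (l * d) - 1 - l * d) / d^2 = 1 - q + q * exp (l * d)"
      unfolding q(3) using d by (simp add: field_simps)
    finally show "expectation (\<lambda>\<omega>. exp (l * (Y \<omega> - a))) \<le> 1 - q + q * exp (l * d)" .
  qed simp
  finally show ?thesis
    using that[OF q(1,2) d] s2q by (simp add: \<mu>_def s2_def)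
qed

lemma mgf_bernstein_nonneg:
  fixes Y :: "'a \<Rightarrow> real"
  assumes Y: "Y \<in> borel_measurable M" "\<And>\<omega>. \<omega> \<in> space M \<Longrightarrow> Y \<omega> \<in> {0..1}" and l: "l \<ge> 0"
  shows "expectation (\<lambda>\<omega>. exp (l * (Y \<omega> - expectation Y))) \<le> exp (l^2 * (1 + 2 * variance Y) / 12)"
proof (cases "expectation Y = 1")
  case True
  have "expectation (\<lambda>\<omega>. exp (l * (Y \<omega> - expectation Y))) \<le> expectation (\<lambda>_. 1)"
    using Y True l
    by (intro integral_mono integrable_const_bound[where B=1] AE_I2) (auto simp: mult_nonneg_nonpos)
  also have "\<dots> \<le> exp (l^2 * (1 + 2 * variance Y) / 12)"
    using variance_positive[of Y] by (simp add: prob_space)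
  finally show ?thesis .
next
  case False
  hence "expectation Y < 1" using expectation_in_unit_interval[OF Y] by simp
  then obtain q d where q: "0 \<le> q" "q \<le> 1" and d: "0 < d" "d \<le> 1"
    and variance: "variance Y = q * (1 - q) * d^2"
    and mgf: "expectation (\<lambda>\<omega>. exp (l * (Y \<omega> - expectation Y)))
               \<le> exp (- (q * (l * d))) * (1 - q + q * exp (l * d))"
    using mgf_le_two_point[OF Y l] by blast
  have "1 - q + q * exp (l * d) > 0"
    using q by (cases "q = 1") (auto intro: add_pos_nonneg)
  hence "exp (- (q * (l * d))) * (1 - q + q * exp (l * d)) = exp (ln (1 - q + q * exp (l * d)) - q * (l * d))"
    by (simp add: exp_diff exp_minus field_simps)
  also have "\<dots> \<le> exp ((l * d)^2 * (1 + 2 * q * (1 - q)) / 12)"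
    using ln_bernoulli_mgf_le[OF q, of "l * d"] by simp
  also have "(l * d)^2 * (1 + 2 * q * (1 - q)) = l^2 * (d^2 + 2 * variance Y)"
    unfolding variance by (simp add: power_mult_distrib algebra_simps)
  also have "exp (l^2 * (d^2 + 2 * variance Y) / 12) \<le> exp (l^2 * (1 + 2 * variance Y) / 12)"
    using d by (simp add: power_le_one mult_left_mono divide_right_mono)
  finally show ?thesis using mgf by linarith
qed

lemma mgf_bernstein:
  fixes Y :: "'a \<Rightarrow> real"
  assumes Y: "Y \<in> borel_measurable M" "\<And>\<omega>. \<omega> \<in> space M \<Longrightarrow> Y \<omega> \<in> {0..1}"
  shows "expectation (\<lambda>\<omega>. exp (l * (Y \<omega> - expectation Y))) \<le> exp (l^2 * (1 + 2 * variance Y) / 12)"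
proof (cases "l \<ge> 0")
  case True thus ?thesis using mgf_bernstein_nonneg[OF Y] by blast
next
  case False
  have int: "integrable M Y" using Y by (intro integrable_const_bound[where B=1] AE_I2) auto
  have "expectation (\<lambda>\<omega>. exp (-l * ((1 - Y \<omega>) - expectation (\<lambda>\<omega>. 1 - Y \<omega>))))
      \<le> exp ((-l)^2 * (1 + 2 * variance (\<lambda>\<omega>. 1 - Y \<omega>)) / 12)"
    using False Y by (intro mgf_bernstein_nonneg) auto
  moreover have "expectation (\<lambda>\<omega>. 1 - Y \<omega>) = 1 - expectation Y"
    using int by (simp add: prob_space)
  ultimately show ?thesis by (simp add: power2_commute algebra_simps)
qed

lemma chernoff_bound:
  fixes Z :: "'a \<Rightarrow> real"
  assumes l: "l > 0" and int: "integrable M (\<lambda>\<omega>. exp (l * Z \<omega>))"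
    and mgf: "expectation (\<lambda>\<omega>. exp (l * Z \<omega>)) \<le> B"
  shows "prob {\<omega> \<in> space M. Z \<omega> \<ge> \<epsilon>} \<le> B / exp (l * \<epsilon>)"
proof -
  have "{\<omega> \<in> space M. Z \<omega> \<ge> \<epsilon>} = {\<omega> \<in> space M. exp (l * Z \<omega>) \<ge> exp (l * \<epsilon>)}"
    using l by auto
  also have "prob \<dots> \<le> expectation (\<lambda>\<omega>. exp (l * Z \<omega>)) / exp (l * \<epsilon>)"
    by (rule integral_Markov_inequality_measure[OF int]) auto
  also have "\<dots> \<le> B / exp (l * \<epsilon>)" using mgf by (simp add: divide_right_mono)
  finally show ?thesis .
qed

lemma hoeffding_lemma:
  fixes Y :: "'a \<Rightarrow> real"
  assumes Y: "Y \<in> borel_measurable M" "\<And>\<omega>. \<omega> \<in> space M \<Longrightarrow> Y \<omega> \<in> {a..b}" and l: "l > 0"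
  shows "expectation (\<lambda>\<omega>. exp (l * (Y \<omega> - expectation Y))) \<le> exp (l^2 * (b - a)^2 / 8)"
proof -
  interpret interval_bounded_random_variable M Y a b
    by unfold_locales (use Y in \<open>auto intro!: AE_I2\<close>)
  have "expectation (\<lambda>_. a) \<le> expectation Y" using Y by (intro integral_mono) auto
  hence "Y \<omega> - expectation Y \<le> b - a" if "\<omega> \<in> space M" for \<omega>
    using Y(2)[OF that] by (simp add: prob_space)
  hence int: "integrable M (\<lambda>\<omega>. exp (l * (Y \<omega> - expectation Y)))"
    using Y l by (intro integrable_const_bound[where B="exp (l * (b - a))"] AE_I2)
      (auto intro!: mult_left_mono)
  have "ennreal (expectation (\<lambda>\<omega>. exp (l * (Y \<omega> - expectation Y))))
      = (\<integral>\<^sup>+\<omega>. ennreal (exp (l * (Y \<omega> - expectation Y))) \<partial>M)"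
    by (rule nn_integral_eq_integral[OF int, symmetric]) auto
  also have "\<dots> \<le> ennreal (exp (l^2 * (b - a)^2 / 8))"
    by (rule Hoeffdings_lemma_nn_integral[OF l])
  finally show ?thesis by (simp add: ennreal_le_iff2)
qed

lemma prob_ge_outside_union:
  assumes "{\<omega> \<in> space M. Q \<omega>} \<in> sets M" "A \<in> sets M" "B \<in> sets M"
    and "\<And>\<omega>. \<omega> \<in> space M \<Longrightarrow> \<omega> \<notin> A \<Longrightarrow> \<omega> \<notin> B \<Longrightarrow> Q \<omega>"
  shows "prob {\<omega> \<in> space M. Q \<omega>} \<ge> 1 - prob A - prob B"
proof -
  have "prob (space M - (A \<union> B)) \<le> prob {\<omega> \<in> space M. Q \<omega>}"
    using assms by (intro finite_measure_mono) auto
  moreover have "prob (space M - (A \<union> B)) = 1 - prob (A \<union> B)"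
    using assms by (intro prob_compl) auto
  moreover have "prob (A \<union> B) \<le> prob A + prob B"
    using assms by (intro measure_subadditive) auto
  ultimately show ?thesis by linarith
qed

end

section \<open>The sample variance as an average of pair statistics\<close>

lemma exists_permutes_pair:
  assumes "i \<in> N" "j \<in> N" "i' \<in> N" "j' \<in> N" "i \<noteq> j" "i' \<noteq> j'"
  shows "\<exists>\<tau>. \<tau> permutes N \<and> \<tau> i = i' \<and> \<tau> j = j'"
proof -
  define s where "s = Transposition.transpose i i'"
  define s' where "s' = Transposition.transpose (s j) j'"
  have s: "s permutes N" unfolding s_def using assms by (intro permutes_swap_id) auto
  hence s': "s' permutes N" unfolding s'_def using assms by (intro permutes_swap_id) (auto simp: permutes_in_image)
  have "s j \<noteq> i'"
  proof
    assume "s j = i'"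
    hence "s (s j) = s i'" by simp
    thus False using assms by (simp add: s_def)
  qed
  hence "(s' \<circ> s) i = i'" "(s' \<circ> s) j = j'" using assms by (simp_all add: s_def s'_def)
  thus ?thesis using permutes_compose[OF s s'] by blast
qed

lemma sum_offdiag_const:
  "(\<Sum>a<n. \<Sum>b<n. if a = b then 0 else c) = c * real n * (real n - 1)"
proof -
  have "(\<Sum>b<n. if a = b then 0 else c) = c * (real n - 1)" if "a < n" for a
  proof -
    have "(\<Sum>b<n. if a = b then 0 else c) = (\<Sum>b<n. c - (if a = b then c else 0))"
      by (intro sum.cong) auto
    thus ?thesis using that by (simp add: sum_subtractf algebra_simps)
  qed
  thus ?thesis by simp
qed

lemma sum_offdiag_permutes:
  assumes "\<pi> permutes {..<n}"
  shows "(\<Sum>a<n. \<Sum>b<n. if a = b then 0 else f (\<pi> a) (\<pi> b)) = (\<Sum>a<n. \<Sum>b<n. if a = b then 0 else f a b)"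
proof -
  have bij: "bij_betw \<pi> {..<n} {..<n}" using assms by (rule permutes_imp_bij)
  have inj: "\<pi> a = \<pi> b \<longleftrightarrow> a = b" for a b using assms by (simp add: permutes_inj inj_eq)
  have "(\<Sum>b<n. if a = b then 0 else f (\<pi> a) (\<pi> b)) = (\<Sum>b<n. if \<pi> a = b then 0 else f (\<pi> a) b)"
    for a using sum.reindex_bij_betw[OF bij, of "\<lambda>b. if \<pi> a = b then 0 else f (\<pi> a) b"]
    by (simp add: inj)
  hence "(\<Sum>a<n. \<Sum>b<n. if a = b then 0 else f (\<pi> a) (\<pi> b))
      = (\<Sum>a<n. \<Sum>b<n. if \<pi> a = b then 0 else f (\<pi> a) b)"
    by simp
  also have "\<dots> = (\<Sum>a<n. \<Sum>b<n. if a = b then 0 else f a b)"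
    using sum.reindex_bij_betw[OF bij, of "\<lambda>a. \<Sum>b<n. if a = b then 0 else f a b"] by simp
  finally show ?thesis .
qed

lemma sum_permutations_pair:
  fixes f :: "nat \<Rightarrow> nat \<Rightarrow> real"
  assumes ij: "i < n" "j < n" "i \<noteq> j"
  shows "(\<Sum>\<pi> | \<pi> permutes {..<n}. f (\<pi> i) (\<pi> j)) * (real n * (real n - 1))
         = real (card {\<pi>. \<pi> permutes {..<n}}) * (\<Sum>a<n. \<Sum>b<n. if a = b then 0 else f a b)"
proof -
  define P where "P = {\<pi>. \<pi> permutes {..<n}}"
  define G where "G = (\<lambda>a b. \<Sum>\<pi>\<in>P. f (\<pi> a) (\<pi> b))"
  have G_const: "G a b = G i j" if ab: "a < n" "b < n" "a \<noteq> b" for a b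
  proof -
    obtain \<tau> where \<tau>: "\<tau> permutes {..<n}" "\<tau> i = a" "\<tau> j = b"
      using exists_permutes_pair[of i "{..<n}" j a b] ij ab by auto
    have "G i j = (\<Sum>\<pi>\<in>P. f ((\<pi> \<circ> \<tau>) i) ((\<pi> \<circ> \<tau>) j))"
      unfolding G_def P_def by (rule sum_permutations_compose_right[OF \<tau>(1)])
    thus ?thesis using \<tau> by (simp add: G_def)
  qed
  have "G i j * real n * (real n - 1) = (\<Sum>a<n. \<Sum>b<n. if a = b then 0 else G i j)"
    by (rule sum_offdiag_const[symmetric])
  also have "\<dots> = (\<Sum>a<n. \<Sum>b<n. if a = b then 0 else G a b)"
    using G_const by (intro sum.cong) auto
  also have "\<dots> = (\<Sum>a<n. \<Sum>b<n. \<Sum>\<pi>\<in>P. if a = b then 0 else f (\<pi> a) (\<pi> b))"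
    by (intro sum.cong refl) (simp add: G_def)
  also have "\<dots> = (\<Sum>a<n. \<Sum>\<pi>\<in>P. \<Sum>b<n. if a = b then 0 else f (\<pi> a) (\<pi> b))"
    by (intro sum.cong refl) (rule sum.swap)
  also have "\<dots> = (\<Sum>\<pi>\<in>P. \<Sum>a<n. \<Sum>b<n. if a = b then 0 else f (\<pi> a) (\<pi> b))"
    by (rule sum.swap)
  also have "\<dots> = real (card P) * (\<Sum>a<n. \<Sum>b<n. if a = b then 0 else f a b)"
    by (simp add: P_def sum_offdiag_permutes)
  finally show ?thesis by (simp add: G_def P_def mult.assoc)
qed

lemma sample_var_eq_offdiag_sum:
  fixes x :: "nat \<Rightarrow> real"
  assumes n: "n \<ge> 2"
  shows "sample_var n x = (\<Sum>a<n. \<Sum>b<n. if a = b then 0 else (x a - x b)^2 / 2) / (real n * (real n - 1))"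
proof -
  define S1 where "S1 = (\<Sum>a<n. x a)"
  define S2 where "S2 = (\<Sum>a<n. x a ^ 2)"
  have inner: "(\<Sum>b<n. (x a - x b)^2 / 2) = (real n * x a^2 - 2 * x a * S1 + S2) / 2" for a
  proof -
    have "(\<Sum>b<n. (x a - x b)^2 / 2) = (\<Sum>b<n. x a^2 / 2 - x a * x b + x b^2 / 2)"
      by (intro sum.cong) (auto simp: power2_diff field_simps)
    also have "\<dots> = real n * x a^2 / 2 - x a * S1 + S2 / 2"
      by (simp add: sum.distrib sum_subtractf sum_distrib_left[symmetric]
          sum_divide_distrib[symmetric] S1_def S2_def)
    finally show ?thesis by (simp add: field_simps)
  qed
  have "(\<Sum>a<n. \<Sum>b<n. if a = b then 0 else (x a - x b)^2 / 2) = (\<Sum>a<n. \<Sum>b<n. (x a - x b)^2 / 2)"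
    by (intro sum.cong) auto
  also have "\<dots> = (\<Sum>a<n. (real n * x a^2 - 2 * x a * S1 + S2) / 2)"
    by (intro sum.cong refl inner)
  also have "\<dots> = real n * S2 - S1^2"
    by (simp add: sum_divide_distrib[symmetric] sum.distrib sum_subtractf sum_distrib_left[symmetric]
        sum_distrib_right[symmetric] S1_def S2_def power2_eq_square field_simps)
  finally have pairs: "(\<Sum>a<n. \<Sum>b<n. if a = b then 0 else (x a - x b)^2 / 2) = real n * S2 - S1^2" .
  define c where "c = S1 / real n"
  have "(\<Sum>a<n. (x a - sample_mean n x)^2) = (\<Sum>a<n. x a^2 - 2 * c * x a + c^2)"
    by (intro sum.cong) (auto simp: sample_mean_def S1_def c_def power2_diff)
  also have "\<dots> = S2 - 2 * c * S1 + real n * c^2"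
    by (simp add: sum.distrib sum_subtractf sum_distrib_left[symmetric] S1_def S2_def)
  also have "\<dots> = S2 - S1^2 / real n"
    unfolding c_def using n by (simp add: field_simps power2_eq_square)
  finally have deviations: "(\<Sum>a<n. (x a - sample_mean n x)^2) = S2 - S1^2 / real n" .
  show ?thesis unfolding sample_var_def pairs deviations using n by (simp add: field_simps)
qed

definition pair_sample_var :: "nat \<Rightarrow> (nat \<Rightarrow> nat) \<Rightarrow> (nat \<Rightarrow> real) \<Rightarrow> real" where
  "pair_sample_var n \<pi> x = (\<Sum>k<n div 2. (x (\<pi> (2 * k)) - x (\<pi> (2 * k + 1)))^2 / 2) / real (n div 2)"

lemma sample_var_eq_average_pair_sample_var:
  fixes x :: "nat \<Rightarrow> real"
  assumes n: "n \<ge> 2"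
  shows "sample_var n x = (\<Sum>\<pi> | \<pi> permutes {..<n}. pair_sample_var n \<pi> x) / real (card {\<pi>. \<pi> permutes {..<n}})"
proof -
  define P where "P = {\<pi>. \<pi> permutes {..<n}}"
  define m where "m = n div 2"
  have m: "real m > 0" using n by (simp add: m_def)
  have P: "real (card P) > 0" unfolding P_def using card_permutations[of "{..<n}" n] by simp
  have pair_sum: "(\<Sum>\<pi>\<in>P. (x (\<pi> (2 * k)) - x (\<pi> (2 * k + 1)))^2 / 2) = real (card P) * sample_var n x"
    if "k < m" for k
  proof -
    have "(\<Sum>\<pi>\<in>P. (x (\<pi> (2 * k)) - x (\<pi> (2 * k + 1)))^2 / 2) * (real n * (real n - 1))
        = real (card P) * (sample_var n x * (real n * (real n - 1)))"
      using sum_permutations_pair[of "2 * k" n "2 * k + 1" "\<lambda>a b. (x a - x b)^2 / 2"] that n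
      by (simp add: P_def m_def sample_var_eq_offdiag_sum)
    thus ?thesis using n by simp
  qed
  have "(\<Sum>\<pi>\<in>P. pair_sample_var n \<pi> x)
      = (\<Sum>\<pi>\<in>P. \<Sum>k<m. (x (\<pi> (2 * k)) - x (\<pi> (2 * k + 1)))^2 / 2) / real m"
    by (simp add: pair_sample_var_def m_def sum_divide_distrib)
  also have "\<dots> = (\<Sum>k<m. \<Sum>\<pi>\<in>P. (x (\<pi> (2 * k)) - x (\<pi> (2 * k + 1)))^2 / 2) / real m"
    by (subst sum.swap) (rule refl)
  also have "\<dots> = real (card P) * sample_var n x" using pair_sum m by simp
  finally show ?thesis using P by (simp add: P_def)
qed

section \<open>IID samples in the unit interval\<close>

lemma borel_measurable_sample_mean:
  assumes "\<And>i. i < n \<Longrightarrow> X i \<in> borel_measurable M"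
  shows "(\<lambda>\<omega>. sample_mean n (\<lambda>i. X i \<omega>)) \<in> borel_measurable M"
proof -
  have "(\<lambda>\<omega>. \<Sum>i<n. X i \<omega>) \<in> borel_measurable M" using assms by (intro borel_measurable_sum) auto
  thus ?thesis unfolding sample_mean_def by measurable
qed

lemma borel_measurable_sample_var:
  assumes "\<And>i. i < n \<Longrightarrow> X i \<in> borel_measurable M"
  shows "(\<lambda>\<omega>. sample_var n (\<lambda>i. X i \<omega>)) \<in> borel_measurable M"
proof -
  note [measurable] = borel_measurable_sample_mean[OF assms]
  have "(\<lambda>\<omega>. \<Sum>i<n. (X i \<omega> - sample_mean n (\<lambda>i. X i \<omega>))^2) \<in> borel_measurable M"
    using assms by (intro borel_measurable_sum) auto
  thus ?thesis unfolding sample_var_def by measurable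
qed

locale iid_unit_sample = prob_space +
  fixes X :: "nat \<Rightarrow> 'a \<Rightarrow> real" and n :: nat
  assumes measurable_X: "\<And>i. i < n \<Longrightarrow> X i \<in> borel_measurable M"
    and indep_X: "indep_vars (\<lambda>_. borel) X {..<n}"
    and distr_X: "\<And>i. i < n \<Longrightarrow> distr M borel (X i) = distr M borel (X 0)"
    and X_in_unit: "\<And>i \<omega>. i < n \<Longrightarrow> \<omega> \<in> space M \<Longrightarrow> X i \<omega> \<in> {0..1}"
begin

lemma expectation_comp_X:
  fixes g :: "real \<Rightarrow> real"
  assumes i: "i < n" and g: "g \<in> borel_measurable borel"
  shows "expectation (\<lambda>\<omega>. g (X i \<omega>)) = expectation (\<lambda>\<omega>. g (X 0 \<omega>))"
proof -
  have X0: "X 0 \<in> borel_measurable M" using i measurable_X by simp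
  have "integral\<^sup>L (distr M borel (X i)) g = expectation (\<lambda>\<omega>. g (X i \<omega>))"
    by (rule integral_distr) (use i g measurable_X in auto)
  moreover have "integral\<^sup>L (distr M borel (X 0)) g = expectation (\<lambda>\<omega>. g (X 0 \<omega>))"
    by (rule integral_distr) (use g X0 in auto)
  ultimately show ?thesis using distr_X[OF i] by simp
qed

lemma measurable_sample_statistics:
  shows "(\<lambda>\<omega>. sample_mean n (\<lambda>i. X i \<omega>)) \<in> borel_measurable M"
    and "(\<lambda>\<omega>. sample_var n (\<lambda>i. X i \<omega>)) \<in> borel_measurable M"
    and "(\<lambda>\<omega>. emp_bernstein_bound n \<delta> (sample_var n (\<lambda>i. X i \<omega>))) \<in> borel_measurable M"
proof -
  show "(\<lambda>\<omega>. sample_mean n (\<lambda>i. X i \<omega>)) \<in> borel_measurable M"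
    by (rule borel_measurable_sample_mean[where X=X, OF measurable_X])
  define S where "S = (\<lambda>\<omega>. sample_var n (\<lambda>i. X i \<omega>))"
  have [measurable]: "S \<in> borel_measurable M"
    unfolding S_def by (rule borel_measurable_sample_var[where X=X, OF measurable_X])
  thus "(\<lambda>\<omega>. sample_var n (\<lambda>i. X i \<omega>)) \<in> borel_measurable M" by (simp add: S_def)
  \<comment> \<open>S stays opaque so that the measurability prover uses the fact above instead of
    decomposing sample_var.\<close>
  have "(\<lambda>\<omega>. emp_bernstein_bound n \<delta> (S \<omega>)) \<in> borel_measurable M"
    unfolding emp_bernstein_bound_def by measurable
  thus "(\<lambda>\<omega>. emp_bernstein_bound n \<delta> (sample_var n (\<lambda>i. X i \<omega>))) \<in> borel_measurable M"
    by (simp add: S_def)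
qed

lemma mgf_sum_deviation:
  assumes s: "s^2 = 1"
  shows "integrable M (\<lambda>\<omega>. exp (l * (s * (\<Sum>i<n. X i \<omega> - expectation (X 0)))))"
    and "expectation (\<lambda>\<omega>. exp (l * (s * (\<Sum>i<n. X i \<omega> - expectation (X 0)))))
           \<le> exp (real n * (l^2 * (1 + 2 * variance (X 0)) / 12))"
proof -
  define \<mu> where "\<mu> = expectation (X 0)"
  define v where "v = 1 + 2 * variance (X 0)"
  define F where "F = (\<lambda>i \<omega>. exp (l * s * (X i \<omega> - \<mu>)))"
  have F_bounded: "\<bar>F i \<omega>\<bar> \<le> exp \<bar>l\<bar>" if "i < n" "\<omega> \<in> space M" for i \<omega>
  proof -
    have "\<mu> \<in> {0..1}"
      unfolding \<mu>_def using that measurable_X X_in_unit by (intro expectation_in_unit_interval) auto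
    hence "\<bar>s * (X i \<omega> - \<mu>)\<bar> \<le> 1"
      using X_in_unit[OF that] s by (auto simp: abs_mult power2_eq_1_iff)
    hence "\<bar>l * (s * (X i \<omega> - \<mu>))\<bar> \<le> \<bar>l\<bar>" by (simp add: abs_mult mult_left_le)
    thus ?thesis by (simp add: F_def mult.assoc)
  qed
  have F_int: "integrable M (F i)" if "i < n" for i
    using that F_bounded measurable_X[OF that]
    by (intro integrable_const_bound[where B="exp \<bar>l\<bar>"] AE_I2) (auto simp: F_def)
  have indep_F: "indep_vars (\<lambda>_. borel) F {..<n}"
    unfolding F_def by (rule indep_vars_compose2[OF indep_X]) measurable
  have prod_F: "(\<Prod>i<n. F i \<omega>) = exp (l * (s * (\<Sum>i<n. X i \<omega> - \<mu>)))" for \<omega>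
    by (simp add: F_def exp_sum[symmetric] sum_distrib_left mult.assoc)
  show "integrable M (\<lambda>\<omega>. exp (l * (s * (\<Sum>i<n. X i \<omega> - expectation (X 0)))))"
    using indep_F F_int by (auto simp flip: prod_F \<mu>_def intro: indep_vars_integrable)
  have EF: "expectation (F i) \<le> exp (l^2 * v / 12)" if "i < n" for i
  proof -
    have "expectation (X i) = \<mu>" "variance (X i) = variance (X 0)"
      using expectation_comp_X[OF that, of "\<lambda>x. x"] expectation_comp_X[OF that, of "\<lambda>x. (x - \<mu>)^2"]
      by (simp_all add: \<mu>_def)
    moreover have "expectation (\<lambda>\<omega>. exp ((l * s) * (X i \<omega> - expectation (X i))))
        \<le> exp ((l * s)^2 * (1 + 2 * variance (X i)) / 12)"
      using measurable_X X_in_unit that by (intro mgf_bernstein) auto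
    ultimately show ?thesis using s by (simp add: F_def v_def power_mult_distrib)
  qed
  have "expectation (\<lambda>\<omega>. \<Prod>i<n. F i \<omega>) = (\<Prod>i<n. expectation (F i))"
    using indep_F F_int by (intro indep_vars_lebesgue_integral) auto
  also have "\<dots> \<le> (\<Prod>i<n. exp (l^2 * v / 12))"
    using EF by (intro prod_mono) (auto simp: F_def intro!: integral_nonneg_AE)
  also have "\<dots> = exp (real n * (l^2 * v / 12))" by (simp flip: exp_of_nat_mult)
  finally show "expectation (\<lambda>\<omega>. exp (l * (s * (\<Sum>i<n. X i \<omega> - expectation (X 0)))))
      \<le> exp (real n * (l^2 * (1 + 2 * variance (X 0)) / 12))"
    by (simp add: prod_F \<mu>_def v_def)
qed

lemma sum_deviation_tail:
  assumes n: "n > 0" and s: "s^2 = 1" and \<epsilon>: "\<epsilon> > 0"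
  shows "prob {\<omega> \<in> space M. s * (\<Sum>i<n. X i \<omega> - expectation (X 0)) \<ge> \<epsilon>}
           \<le> exp (- 3 * \<epsilon>^2 / (real n * (1 + 2 * variance (X 0))))"
proof -
  define v where "v = 1 + 2 * variance (X 0)"
  have v: "v \<ge> 1" unfolding v_def using variance_positive by simp
  \<comment> \<open>The choice of l minimises the Chernoff exponent n l^2 v / 12 - l \<epsilon>.\<close>
  define l where "l = 6 * \<epsilon> / (real n * v)"
  have l: "l > 0" using \<epsilon> n v by (simp add: l_def)
  have "prob {\<omega> \<in> space M. s * (\<Sum>i<n. X i \<omega> - expectation (X 0)) \<ge> \<epsilon>}
      \<le> exp (real n * (l^2 * v / 12)) / exp (l * \<epsilon>)"
    using mgf_sum_deviation[OF s, of l] by (intro chernoff_bound[OF l]) (simp_all add: v_def)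
  also have "\<dots> = exp (- 3 * \<epsilon>^2 / (real n * v))"
  proof -
    have "real n * (l^2 * v / 12) - l * \<epsilon> = - 3 * \<epsilon>^2 / (real n * v)"
      unfolding l_def using n v by (simp add: field_simps power2_eq_square)
    thus ?thesis by (simp add: exp_diff[symmetric])
  qed
  finally show ?thesis by (simp add: v_def)
qed

lemma expectation_half_square_diff:
  assumes ij: "i < n" "j < n" "i \<noteq> j"
  shows "expectation (\<lambda>\<omega>. (X i \<omega> - X j \<omega>)^2 / 2) = variance (X 0)"
proof -
  have int: "integrable M (X k)" "integrable M (\<lambda>\<omega>. X k \<omega>^2)" if "k < n" for k
    using measurable_X[OF that] X_in_unit[OF that]
    by (auto intro!: integrable_const_bound[where B=1] simp: abs_square_le_1)
  define \<mu> where "\<mu> = expectation (X 0)"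
  define M2 where "M2 = expectation (\<lambda>\<omega>. X 0 \<omega>^2)"
  have E: "expectation (X k) = \<mu>" "expectation (\<lambda>\<omega>. X k \<omega>^2) = M2" if "k < n" for k
    using expectation_comp_X[OF that, of "\<lambda>x. x"] expectation_comp_X[OF that, of "\<lambda>x. x^2"]
    by (simp_all add: \<mu>_def M2_def)
  have "expectation (\<lambda>\<omega>. \<Prod>k\<in>{i, j}. X k \<omega>) = (\<Prod>k\<in>{i, j}. expectation (X k))"
    using ij int by (intro indep_vars_lebesgue_integral indep_vars_subset[OF indep_X]) auto
  hence Eij: "expectation (\<lambda>\<omega>. X i \<omega> * X j \<omega>) = \<mu> * \<mu>" using ij E by simp
  have int_ij: "integrable M (\<lambda>\<omega>. X i \<omega> * X j \<omega>)"
    using ij measurable_X X_in_unit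
    by (intro integrable_const_bound[where B=1] AE_I2) (auto simp: abs_mult intro: mult_le_one)
  have "expectation (\<lambda>\<omega>. (X i \<omega> - X j \<omega>)^2 / 2)
      = expectation (\<lambda>\<omega>. (X i \<omega>^2 / 2 - X i \<omega> * X j \<omega>) + X j \<omega>^2 / 2)"
    by (rule Bochner_Integration.integral_cong) (auto simp: power2_diff field_simps)
  also have "\<dots> = M2 - \<mu> * \<mu>" using int ij int_ij E Eij by simp
  also have "\<dots> = variance (X 0)"
    using variance_eq[OF int[of 0]] ij by (simp add: \<mu>_def M2_def power2_eq_square)
  finally show ?thesis .
qed

lemma indep_half_square_diffs:
  assumes \<pi>: "\<pi> permutes {..<n}"
  shows "indep_vars (\<lambda>_. borel) (\<lambda>k \<omega>. (X (\<pi> (2 * k)) \<omega> - X (\<pi> (2 * k + 1)) \<omega>)^2 / 2) {..<n div 2}"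
proof -
  define K where "K = (\<lambda>k. {\<pi> (2 * k), \<pi> (2 * k + 1)})"
  have "\<pi> i < n" if "i < n" for i using that permutes_in_image[OF \<pi>] by simp
  moreover have "\<pi> a = \<pi> b \<longleftrightarrow> a = b" for a b using \<pi> by (simp add: permutes_inj inj_eq)
  ultimately have blocks:
    "indep_vars (\<lambda>k. PiM (K k) (\<lambda>_. borel)) (\<lambda>k \<omega>. restrict (\<lambda>i. X i \<omega>) (K k)) {..<n div 2}"
    by (intro indep_vars_restrict[OF indep_X]) (auto simp: K_def disjoint_family_on_def)
  have "(\<lambda>f. (f (\<pi> (2 * k)) - f (\<pi> (2 * k + 1)))^2 / 2 :: real)
      \<in> borel_measurable (PiM (K k) (\<lambda>_. borel))" for k
  proof -
    have [measurable]: "(\<lambda>f. f (\<pi> (2 * k))) \<in> borel_measurable (PiM (K k) (\<lambda>_. borel))"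
      "(\<lambda>f. f (\<pi> (2 * k + 1))) \<in> borel_measurable (PiM (K k) (\<lambda>_. borel))"
      by (auto intro!: measurable_component_singleton simp: K_def)
    show ?thesis by measurable
  qed
  from indep_vars_compose2[OF blocks this] show ?thesis by (simp add: K_def)
qed

lemma pair_sample_var_mgf:
  assumes n: "n \<ge> 2" and \<pi>: "\<pi> permutes {..<n}" and t: "t > 0"
  shows "expectation (\<lambda>\<omega>. exp (t * (variance (X 0) - pair_sample_var n \<pi> (\<lambda>i. X i \<omega>))))
           \<le> exp (t^2 / (32 * real (n div 2)))"
proof -
  define m where "m = n div 2"
  define s2 where "s2 = variance (X 0)"
  define Z where "Z = (\<lambda>k \<omega>. (X (\<pi> (2 * k)) \<omega> - X (\<pi> (2 * k + 1)) \<omega>)^2 / 2)"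
  define l where "l = t / real m"
  define E where "E = (\<lambda>k \<omega>. exp (l * (s2 - Z k \<omega>)))"
  have m: "real m > 0" using n by (simp add: m_def)
  have l: "l > 0" using t m by (simp add: l_def)
  have idx: "\<pi> (2 * k) < n" "\<pi> (2 * k + 1) < n" "\<pi> (2 * k) \<noteq> \<pi> (2 * k + 1)" if "k < m" for k
    using that permutes_in_image[OF \<pi>] permutes_inj[OF \<pi>] by (auto simp: m_def inj_eq)
  have Z_measurable: "Z k \<in> borel_measurable M" if "k < m" for k
    using measurable_X idx[OF that] unfolding Z_def by measurable
  have Z_bounded: "Z k \<omega> \<in> {0..1/2}" if "k < m" "\<omega> \<in> space M" for k \<omega>
    using X_in_unit[OF idx(1)[OF that(1)] that(2)] X_in_unit[OF idx(2)[OF that(1)] that(2)]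
    by (auto simp: Z_def abs_square_le_1 abs_le_iff)
  have indep_E: "indep_vars (\<lambda>_. borel) E {..<m}"
    unfolding E_def Z_def m_def by (rule indep_vars_compose2[OF indep_half_square_diffs[OF \<pi>]]) measurable
  have E_integrable: "integrable M (E k)" if "k < m" for k
    using Z_measurable[OF that] Z_bounded[OF that] l
    by (intro integrable_const_bound[where B="exp (l * s2)"] AE_I2) (auto simp: E_def)
  have EE: "expectation (E k) \<le> exp (l^2 / 32)" if "k < m" for k
  proof -
    have "expectation (\<lambda>\<omega>. exp (l * (- Z k \<omega> - expectation (\<lambda>\<omega>. - Z k \<omega>))))
        \<le> exp (l^2 * (0 - (-1/2))^2 / 8)"
      using Z_measurable[OF that] Z_bounded[OF that] by (intro hoeffding_lemma l) auto
    moreover have "expectation (Z k) = s2"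
      unfolding Z_def s2_def using idx[OF that] by (intro expectation_half_square_diff)
    ultimately show ?thesis by (simp add: E_def power2_eq_square algebra_simps)
  qed
  have prod_E: "(\<Prod>k<m. E k \<omega>) = exp (t * (s2 - pair_sample_var n \<pi> (\<lambda>i. X i \<omega>)))" for \<omega>
  proof -
    have "(\<Prod>k<m. E k \<omega>) = exp (l * real m * s2 - l * (\<Sum>k<m. Z k \<omega>))"
      by (simp add: E_def exp_sum[symmetric] sum_subtractf sum_distrib_left[symmetric] algebra_simps)
    thus ?thesis using m by (simp add: l_def pair_sample_var_def Z_def m_def field_simps)
  qed
  have "expectation (\<lambda>\<omega>. \<Prod>k<m. E k \<omega>) = (\<Prod>k<m. expectation (E k))"
    using indep_E E_integrable by (intro indep_vars_lebesgue_integral) auto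
  also have "\<dots> \<le> (\<Prod>k<m. exp (l^2 / 32))"
    using EE by (intro prod_mono) (auto simp: E_def intro!: integral_nonneg_AE)
  also have "\<dots> = exp (t^2 / (32 * real m))"
    using m by (simp add: l_def power2_eq_square field_simps flip: exp_of_nat_mult)
  finally show ?thesis unfolding prod_E by (simp add: s2_def m_def)
qed

lemma borel_measurable_pair_sample_var:
  assumes \<pi>: "\<pi> permutes {..<n}"
  shows "(\<lambda>\<omega>. pair_sample_var n \<pi> (\<lambda>i. X i \<omega>)) \<in> borel_measurable M"
proof -
  have "(\<lambda>\<omega>. (X (\<pi> (2 * k)) \<omega> - X (\<pi> (2 * k + 1)) \<omega>)^2 / 2) \<in> borel_measurable M"
    if "k < n div 2" for k
    using that measurable_X permutes_in_image[OF \<pi>]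
    by (intro borel_measurable_divide borel_measurable_power borel_measurable_diff) auto
  hence "(\<lambda>\<omega>. \<Sum>k<n div 2. (X (\<pi> (2 * k)) \<omega> - X (\<pi> (2 * k + 1)) \<omega>)^2 / 2) \<in> borel_measurable M"
    by (intro borel_measurable_sum) auto
  thus ?thesis unfolding pair_sample_var_def by measurable
qed

lemma mgf_sample_var_deficit:
  assumes n: "n \<ge> 2" and t: "t > 0"
  defines "s2 \<equiv> variance (X 0)"
  shows "integrable M (\<lambda>\<omega>. exp (t * (s2 - sample_var n (\<lambda>i. X i \<omega>))))"
    and "expectation (\<lambda>\<omega>. exp (t * (s2 - sample_var n (\<lambda>i. X i \<omega>))))
           \<le> exp (t^2 / (32 * real (n div 2)))"
proof -
  define m where "m = n div 2"
  define P where "P = {\<pi>. \<pi> permutes {..<n}}"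
  define G where "G = (\<lambda>\<pi> \<omega>. exp (t * (s2 - pair_sample_var n \<pi> (\<lambda>i. X i \<omega>))))"
  have P: "finite P" "P \<noteq> {}" "real (card P) > 0"
    using finite_permutations[of "{..<n}"] card_permutations[of "{..<n}" n] permutes_id[of "{..<n}"]
    by (auto simp: P_def simp del: permutes_id)
  have G_measurable: "G \<pi> \<in> borel_measurable M" if "\<pi> \<in> P" for \<pi>
    using borel_measurable_pair_sample_var that unfolding G_def P_def mem_Collect_eq by measurable
  have G_bounded: "G \<pi> \<omega> \<le> exp (t * s2)" for \<pi> \<omega>
    using t by (simp add: G_def pair_sample_var_def sum_nonneg mult_left_mono)
  have G_integrable: "integrable M (G \<pi>)" if "\<pi> \<in> P" for \<pi>
    using G_measurable[OF that] G_bounded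
    by (intro integrable_const_bound[where B="exp (t * s2)"] AE_I2) (auto simp: G_def)
  have jensen: "exp (t * (s2 - sample_var n (\<lambda>i. X i \<omega>))) \<le> (\<Sum>\<pi>\<in>P. G \<pi> \<omega>) / real (card P)" for \<omega>
  proof -
    have "t * (s2 - sample_var n (\<lambda>i. X i \<omega>))
        = (\<Sum>\<pi>\<in>P. t * (s2 - pair_sample_var n \<pi> (\<lambda>i. X i \<omega>))) / real (card P)"
      unfolding sample_var_eq_average_pair_sample_var[OF n] P_def[symmetric] using P
      by (simp add: sum_subtractf sum_distrib_left[symmetric] field_simps)
    thus ?thesis
      using exp_average_le_average_exp[OF P(1,2)] by (simp add: G_def)
  qed
  show integrable: "integrable M (\<lambda>\<omega>. exp (t * (s2 - sample_var n (\<lambda>i. X i \<omega>))))"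
  proof (rule integrable_const_bound[where B="exp (t * s2)"])
    show "AE \<omega> in M. norm (exp (t * (s2 - sample_var n (\<lambda>i. X i \<omega>)))) \<le> exp (t * s2)"
    proof (rule AE_I2)
      fix \<omega>
      have "(\<Sum>\<pi>\<in>P. G \<pi> \<omega>) \<le> real (card P) * exp (t * s2)"
        using sum_mono[of P "\<lambda>\<pi>. G \<pi> \<omega>" "\<lambda>_. exp (t * s2)"] G_bounded by simp
      hence "(\<Sum>\<pi>\<in>P. G \<pi> \<omega>) / real (card P) \<le> exp (t * s2)"
        using P by (simp add: divide_le_eq mult.commute)
      hence "exp (t * (s2 - sample_var n (\<lambda>i. X i \<omega>))) \<le> exp (t * s2)"
        using jensen[of \<omega>] by linarith
      thus "norm (exp (t * (s2 - sample_var n (\<lambda>i. X i \<omega>)))) \<le> exp (t * s2)" by simp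
    qed
  qed (use measurable_sample_statistics(2) in measurable)
  have "expectation (\<lambda>\<omega>. exp (t * (s2 - sample_var n (\<lambda>i. X i \<omega>))))
      \<le> expectation (\<lambda>\<omega>. (\<Sum>\<pi>\<in>P. G \<pi> \<omega>) / real (card P))"
    using G_integrable jensen by (intro integral_mono[OF integrable]) auto
  also have "\<dots> = (\<Sum>\<pi>\<in>P. expectation (G \<pi>)) / real (card P)"
    using G_integrable by (simp add: Bochner_Integration.integral_sum)
  also have "\<dots> \<le> (\<Sum>\<pi>\<in>P. exp (t^2 / (32 * real m))) / real (card P)"
    using pair_sample_var_mgf[OF n _ t] P
    by (intro divide_right_mono sum_mono) (auto simp: G_def P_def s2_def m_def)
  also have "\<dots> = exp (t^2 / (32 * real m))" using P by simp
  finally show "expectation (\<lambda>\<omega>. exp (t * (s2 - sample_var n (\<lambda>i. X i \<omega>))))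
      \<le> exp (t^2 / (32 * real (n div 2)))"
    by (simp add: m_def)
qed

lemma sample_var_lower_tail:
  assumes n: "n \<ge> 2" and \<epsilon>: "\<epsilon> > 0"
  shows "prob {\<omega> \<in> space M. variance (X 0) - sample_var n (\<lambda>i. X i \<omega>) \<ge> \<epsilon>}
           \<le> exp (- 8 * real (n div 2) * \<epsilon>^2)"
proof -
  define m where "m = n div 2"
  define t where "t = 16 * real m * \<epsilon>"
  have m: "real m > 0" using n by (simp add: m_def)
  have t: "t > 0" using m \<epsilon> by (simp add: t_def)
  have "prob {\<omega> \<in> space M. variance (X 0) - sample_var n (\<lambda>i. X i \<omega>) \<ge> \<epsilon>}
      \<le> exp (t^2 / (32 * real m)) / exp (t * \<epsilon>)"
    using mgf_sample_var_deficit[OF n t] by (intro chernoff_bound[OF t]) (simp_all add: m_def)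
  also have "\<dots> = exp (- 8 * real m * \<epsilon>^2)"
    using m by (simp add: t_def power2_eq_square field_simps flip: exp_diff)
  finally show ?thesis by (simp add: m_def)
qed

lemma sample_mean_deviation_tail:
  assumes n: "n > 0" and s: "s^2 = 1" and L: "L > 0"
  shows "prob {\<omega> \<in> space M. s * (sample_mean n (\<lambda>i. X i \<omega>) - expectation (X 0))
            \<ge> sqrt ((1 + 2 * variance (X 0)) / (3 * real n) * L)} \<le> exp (- L)"
proof -
  define v where "v = 1 + 2 * variance (X 0)"
  define b where "b = sqrt (v / (3 * real n) * L)"
  have v: "v > 0" using variance_positive[of "X 0"] unfolding v_def by linarith
  have b: "b > 0" using v n L by (simp add: b_def)
  have "s * (sample_mean n (\<lambda>i. X i \<omega>) - expectation (X 0)) \<ge> b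
      \<longleftrightarrow> s * (\<Sum>i<n. X i \<omega> - expectation (X 0)) \<ge> real n * b" for \<omega>
    using n by (simp add: sample_mean_def sum_subtractf field_simps)
  hence "prob {\<omega> \<in> space M. s * (sample_mean n (\<lambda>i. X i \<omega>) - expectation (X 0)) \<ge> b}
      \<le> exp (- 3 * (real n * b)^2 / (real n * v))"
    using sum_deviation_tail[OF n s] n b by (simp add: v_def)
  also have "- 3 * (real n * b)^2 / (real n * v) = - L"
    using v n L by (simp add: b_def power_mult_distrib power2_eq_square field_simps)
  finally show ?thesis by (simp add: b_def v_def)
qed

lemma sample_var_deviation_tail:
  assumes n: "n \<ge> 2" and L: "L > 0"
  shows "prob {\<omega> \<in> space M. variance (X 0) - sample_var n (\<lambda>i. X i \<omega>)
            \<ge> sqrt (L / (8 * real (n div 2)))} \<le> exp (- L)"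
proof -
  have m: "real (n div 2) > 0" using n by simp
  have "prob {\<omega> \<in> space M. variance (X 0) - sample_var n (\<lambda>i. X i \<omega>) \<ge> sqrt (L / (8 * real (n div 2)))}
      \<le> exp (- 8 * real (n div 2) * sqrt (L / (8 * real (n div 2)))^2)"
    using m L by (intro sample_var_lower_tail n) simp
  also have "\<dots> = exp (- L)" using m L by simp
  finally show ?thesis .
qed

lemma emp_bernstein_one_sided:
  assumes n: "n \<ge> 2" and \<delta>: "0 < \<delta>" "\<delta> < 1" and s: "s^2 = 1"
  shows "prob {\<omega> \<in> space M. s * (sample_mean n (\<lambda>i. X i \<omega>) - expectation (X 0))
            \<le> emp_bernstein_bound n \<delta> (sample_var n (\<lambda>i. X i \<omega>))} \<ge> 1 - \<delta>"
proof -
  define L where "L = ln (2 / \<delta>)"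
  have L: "L > 0" and exp_L: "exp (- L) = \<delta> / 2" using \<delta> by (simp_all add: L_def exp_minus)
  define A where "A = {\<omega> \<in> space M. s * (sample_mean n (\<lambda>i. X i \<omega>) - expectation (X 0))
                         \<ge> sqrt ((1 + 2 * variance (X 0)) / (3 * real n) * L)}"
  define B where "B = {\<omega> \<in> space M. variance (X 0) - sample_var n (\<lambda>i. X i \<omega>)
                         \<ge> sqrt (L / (8 * real (n div 2)))}"
  have mean_dev: "(\<lambda>\<omega>. s * (sample_mean n (\<lambda>i. X i \<omega>) - expectation (X 0))) \<in> borel_measurable M"
    using measurable_sample_statistics(1) by (intro borel_measurable_times borel_measurable_diff) auto
  have var_dev: "(\<lambda>\<omega>. variance (X 0) - sample_var n (\<lambda>i. X i \<omega>)) \<in> borel_measurable M"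
    using measurable_sample_statistics(2) by (intro borel_measurable_diff) auto
  note bound = measurable_sample_statistics(3)[of \<delta>]
  have events: "A \<in> sets M" "B \<in> sets M"
    "{\<omega> \<in> space M. s * (sample_mean n (\<lambda>i. X i \<omega>) - expectation (X 0))
        \<le> emp_bernstein_bound n \<delta> (sample_var n (\<lambda>i. X i \<omega>))} \<in> sets M"
    unfolding A_def B_def
    by (rule borel_measurable_le[OF borel_measurable_const mean_dev]
        borel_measurable_le[OF borel_measurable_const var_dev] borel_measurable_le[OF mean_dev bound])+
  have "prob A \<le> \<delta> / 2" "prob B \<le> \<delta> / 2"
    using sample_mean_deviation_tail[OF _ s L] sample_var_deviation_tail[OF n L] n
    by (simp_all add: A_def B_def exp_L)
  moreover have "prob {\<omega> \<in> space M. s * (sample_mean n (\<lambda>i. X i \<omega>) - expectation (X 0))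
            \<le> emp_bernstein_bound n \<delta> (sample_var n (\<lambda>i. X i \<omega>))} \<ge> 1 - prob A - prob B"
  proof (rule prob_ge_outside_union[OF events(3,1,2)])
    fix \<omega> assume \<omega>: "\<omega> \<in> space M" "\<omega> \<notin> A" "\<omega> \<notin> B"
    have S: "sample_var n (\<lambda>i. X i \<omega>) \<ge> 0"
      unfolding sample_var_def using n by (intro divide_nonneg_nonneg sum_nonneg) auto
    have "variance (X 0) \<le> sample_var n (\<lambda>i. X i \<omega>) + sqrt (ln (2 / \<delta>) / (8 * real (n div 2)))"
      using \<omega> unfolding B_def L_def by auto
    hence "sqrt ((1 + 2 * variance (X 0)) / (3 * real n) * L)
        \<le> emp_bernstein_bound n \<delta> (sample_var n (\<lambda>i. X i \<omega>))"
      unfolding L_def by (rule sqrt_bernstein_le_emp_bernstein_bound[OF n \<delta> S])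
    moreover have "s * (sample_mean n (\<lambda>i. X i \<omega>) - expectation (X 0))
        < sqrt ((1 + 2 * variance (X 0)) / (3 * real n) * L)"
      using \<omega> unfolding A_def by auto
    ultimately show "s * (sample_mean n (\<lambda>i. X i \<omega>) - expectation (X 0))
        \<le> emp_bernstein_bound n \<delta> (sample_var n (\<lambda>i. X i \<omega>))"
      by linarith
  qed
  ultimately show ?thesis by linarith
qed

end

theorem mainTheorem10:
  fixes M :: "'a measure" and X :: "nat \<Rightarrow> 'a \<Rightarrow> real" and n :: nat and \<delta> :: real
  assumes "prob_space M"
    and "n \<ge> 2"
    and "0 < \<delta>" and "\<delta> < 1"
    and "\<And>i. i < n \<Longrightarrow> X i \<in> borel_measurable M"
    and "prob_space.indep_vars M (\<lambda>_. borel) X {..<n}"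
    and "\<And>i. i < n \<Longrightarrow> distr M borel (X i) = distr M borel (X 0)"
    and "\<And>i \<omega>. i < n \<Longrightarrow> \<omega> \<in> space M \<Longrightarrow> X i \<omega> \<in> {0..1}"
  shows "measure M {\<omega> \<in> space M.
            sample_mean n (\<lambda>i. X i \<omega>) - prob_space.expectation M (X 0)
              \<le> emp_bernstein_bound n \<delta> (sample_var n (\<lambda>i. X i \<omega>))} \<ge> 1 - \<delta>
       \<and> measure M {\<omega> \<in> space M.
            prob_space.expectation M (X 0) - sample_mean n (\<lambda>i. X i \<omega>)
              \<le> emp_bernstein_bound n \<delta> (sample_var n (\<lambda>i. X i \<omega>))} \<ge> 1 - \<delta>"
proof -
  interpret iid_unit_sample M X n
    by (rule iid_unit_sample.intro[OF assms(1) iid_unit_sample_axioms.intro[OF assms(5-8)]])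
  show ?thesis
    using emp_bernstein_one_sided[OF assms(2-4), of 1] emp_bernstein_one_sided[OF assms(2-4), of "-1"]
    by simp
qed

end
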